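(* Let $n\ge 2$ and $1\le k\le n/2$ be integers, and let $w=\mathrm{A}^k\mathrm{M}^{n-k}$ be the word consisting of $k$ copies of a letter $\mathrm{A}$ followed by $n-k$ copies of a different letter $\mathrm{M}$. Then $f(w)=\max\{2(n-k)+1,\,4k\}$.
   Context: A word of length $n$ is a sequence $w=w_1w_2\cdots w_n$ of letters (symbols). Let $[n]=\{1,\dots,n\}$. An $n$-grid is a function $G:[n]^2\to\Sigma$, where $\Sigma$ is an arbitrary set of letters. The $i$th row of $G$ contains $w$ if $G(i,j)=w_j$ for all $1\le j\le n$, or $G(i,j)=w_{n-j+1}$ for all $1\le j\le n$. The $j$th column contains $w$ if $G(i,j)=w_i$ for all $i$, or $G(i,j)=w_{n-i+1}$ for all $i$. The main diagonal contains $w$ if $G(i,i)=w_i$ for all $i$ or $G(i,i)=w_{n-i+1}$ for all $i$; the anti-diagonal contains $w$ if $G(i,n-i+1)=w_i$ for all $i$ or $G(i,n-i+1)=w_{n-i+1}$ for all $i$. Let $f(w,G)$ be the number of the $2n+2$ lines ($n$ rows, $n$ columns, $2$ diagonals) of $G$ that contain $w$, and $f(w)=\max_G f(w,G)$ over all $n$-grids $G$. *)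

theory Defs
  imports Main
begin

text \<open>A word of length n is a function w :: nat => 'a, with letters w 1, ..., w n.
An n-grid is a function G :: nat => nat => 'a, only its values on {1..n} x {1..n} matter.\<close>

definition row_contains :: "nat \<Rightarrow> (nat \<Rightarrow> 'a) \<Rightarrow> (nat \<Rightarrow> nat \<Rightarrow> 'a) \<Rightarrow> nat \<Rightarrow> bool" where
  "row_contains n w G i \<longleftrightarrow>
     (\<forall>j\<in>{1..n}. G i j = w j) \<or> (\<forall>j\<in>{1..n}. G i j = w (n - j + 1))"

definition col_contains :: "nat \<Rightarrow> (nat \<Rightarrow> 'a) \<Rightarrow> (nat \<Rightarrow> nat \<Rightarrow> 'a) \<Rightarrow> nat \<Rightarrow> bool" where
  "col_contains n w G j \<longleftrightarrow>
     (\<forall>i\<in>{1..n}. G i j = w i) \<or> (\<forall>i\<in>{1..n}. G i j = w (n - i + 1))"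

definition diag_contains :: "nat \<Rightarrow> (nat \<Rightarrow> 'a) \<Rightarrow> (nat \<Rightarrow> nat \<Rightarrow> 'a) \<Rightarrow> bool" where
  "diag_contains n w G \<longleftrightarrow>
     (\<forall>i\<in>{1..n}. G i i = w i) \<or> (\<forall>i\<in>{1..n}. G i i = w (n - i + 1))"

definition antidiag_contains :: "nat \<Rightarrow> (nat \<Rightarrow> 'a) \<Rightarrow> (nat \<Rightarrow> nat \<Rightarrow> 'a) \<Rightarrow> bool" where
  "antidiag_contains n w G \<longleftrightarrow>
     (\<forall>i\<in>{1..n}. G i (n - i + 1) = w i) \<or> (\<forall>i\<in>{1..n}. G i (n - i + 1) = w (n - i + 1))"

definition lines_count :: "nat \<Rightarrow> (nat \<Rightarrow> 'a) \<Rightarrow> (nat \<Rightarrow> nat \<Rightarrow> 'a) \<Rightarrow> nat" where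
  "lines_count n w G =
     card {i\<in>{1..n}. row_contains n w G i} + card {j\<in>{1..n}. col_contains n w G j}
     + (if diag_contains n w G then 1 else 0) + (if antidiag_contains n w G then 1 else 0)"

text \<open>f(w) = max over all n-grids. Grid letters range over the letter type of w
(letters outside the word's alphabet never help a line contain w).\<close>
definition f_max :: "nat \<Rightarrow> (nat \<Rightarrow> 'a) \<Rightarrow> nat" where
  "f_max n w = Max {lines_count n w G | G. True}"

end

theory Submission
  imports Defs
begin

text \<open>A line containing A^k M^(n-k) has M at its middle n - 2k positions, and different
  letters at any of its first k and any of its last k positions. Split the rows (columns) into
  the first k, the middle n - 2k and the last k. A containing middle row excludes containing
  columns at both ends, because both would put M into that row at positions where its letters
  differ; dually for a middle column. A containing main diagonal excludes a containing first-k
  row i together with a containing last-k column j, since (i,i), (i,j), (j,j) would carry three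
  pairwise different letters; the same holds with the ends swapped, and for the antidiagonal
  with rows and columns at the same end. Counting the containing lines block by block under
  these exclusions bounds f(w, G) by max (2(n - k) + 1) (4k). The bound is attained by the grid with
  A exactly on the first k rows and columns, and by the grid with A exactly on the two k \<times> k
  corner squares of the main diagonal.\<close>

definition line_contains :: "nat \<Rightarrow> (nat \<Rightarrow> 'a) \<Rightarrow> (nat \<Rightarrow> 'a) \<Rightarrow> bool" where
  "line_contains n w l \<longleftrightarrow> (\<forall>p\<in>{1..n}. l p = w p) \<or> (\<forall>p\<in>{1..n}. l p = w (n - p + 1))"

lemma contains_iff_line_contains:
  shows row_contains_iff: "row_contains n w G i \<longleftrightarrow> line_contains n w (G i)"
    and col_contains_iff: "col_contains n w G j \<longleftrightarrow> line_contains n w (\<lambda>i. G i j)"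
    and diag_contains_iff: "diag_contains n w G \<longleftrightarrow> line_contains n w (\<lambda>i. G i i)"
    and antidiag_contains_iff:
      "antidiag_contains n w G \<longleftrightarrow> line_contains n w (\<lambda>i. G i (n - i + 1))"
  unfolding row_contains_def col_contains_def diag_contains_def antidiag_contains_def
    line_contains_def by simp_all

lemma line_contains_reverse:
  assumes "line_contains n w l"
  shows "line_contains n w (\<lambda>p. l (n - p + 1))"
proof -
  have "n - p + 1 \<in> {1..n}" "n - (n - p + 1) + 1 = p" if "p \<in> {1..n}" for p
    using that by auto
  then show ?thesis
    using assms unfolding line_contains_def by (metis (no_types, lifting))
qed

lemma card_filter_Un3_le:
  assumes "finite I" "finite J" "finite K"
  shows "card {x \<in> I \<union> J \<union> K. P x}
    \<le> (if \<exists>x\<in>I. P x then card I else 0) + (if \<exists>x\<in>J. P x then card J else 0)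
       + (if \<exists>x\<in>K. P x then card K else 0)"
proof -
  have block: "card {x \<in> X. P x} \<le> (if \<exists>x\<in>X. P x then card X else 0)" if "finite X" for X
    using that by (auto intro: card_mono)
  have "{x \<in> I \<union> J \<union> K. P x} = {x \<in> I. P x} \<union> {x \<in> J. P x} \<union> {x \<in> K. P x}"
    by blast
  then have "card {x \<in> I \<union> J \<union> K. P x}
      \<le> card {x \<in> I. P x} + card {x \<in> J. P x} + card {x \<in> K. P x}"
    by (metis (no_types, lifting) card_Un_le add_right_mono order_trans)
  with block[OF assms(1)] block[OF assms(2)] block[OF assms(3)] show ?thesis
    by linarith
qed

lemma pattern_count_le:
  fixes k m :: nat
  assumes "k \<ge> 1"
    and "mr \<Longrightarrow> \<not> (l \<and> r)" and "mc \<Longrightarrow> \<not> (t \<and> b)"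
    and "dg \<Longrightarrow> \<not> (t \<and> r) \<and> \<not> (b \<and> l)"
    and "ad \<Longrightarrow> \<not> (t \<and> l) \<and> \<not> (b \<and> r)"
  shows "(if t then k else 0) + (if mr then m else 0) + (if b then k else 0)
       + ((if l then k else 0) + (if mc then m else 0) + (if r then k else 0))
       + (if dg then 1 else 0) + (if ad then 1 else 0) \<le> max (2 * (m + k) + 1) (4 * k)"
  using assms
  by (cases t; cases b; cases mr; cases l; cases r; cases mc; cases dg; cases ad)
    (simp_all add: max_def)

locale AM_word =
  fixes n k :: nat and A M :: 'a
  assumes k_pos: "1 \<le> k" and two_k_le: "2 * k \<le> n" and A_neq_M: "A \<noteq> M"
begin

abbreviation w :: "nat \<Rightarrow> 'a" where
  "w \<equiv> \<lambda>i. if i \<le> k then A else M"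

abbreviation head :: "nat set" where
  "head \<equiv> {1..k}"

abbreviation middle :: "nat set" where
  "middle \<equiv> {k+1..n-k}"

abbreviation tail :: "nat set" where
  "tail \<equiv> {n-k+1..n}"

lemma positions_split: "{1..n} = head \<union> middle \<union> tail"
  using two_k_le by auto

lemma reflect_head_tail:
  shows "p \<in> head \<Longrightarrow> n - p + 1 \<in> tail" and "p \<in> tail \<Longrightarrow> n - p + 1 \<in> head"
  using two_k_le by auto

lemma line_contains_letter: "line_contains n w l \<Longrightarrow> p \<in> {1..n} \<Longrightarrow> l p = A \<or> l p = M"
  unfolding line_contains_def by metis

lemma line_contains_middle: "line_contains n w l \<Longrightarrow> p \<in> middle \<Longrightarrow> l p = M"
  unfolding line_contains_def by auto

lemma line_contains_ends_differ:
  assumes "line_contains n w l" "p \<in> head" "q \<in> tail"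
  shows "l p \<noteq> l q"
proof -
  have "p \<in> {1..n}" "q \<in> {1..n}" "w p = A" "w q = M" "w (n - p + 1) = M" "w (n - q + 1) = A"
    using assms(2,3) two_k_le by auto
  then show ?thesis
    using assms(1) A_neq_M unfolding line_contains_def by auto
qed

lemma no_middle_row_with_head_and_tail_columns:
  assumes "line_contains n w (G i)" "i \<in> middle"
    and "line_contains n w (\<lambda>r. G r j)" "j \<in> head"
    and "line_contains n w (\<lambda>r. G r j')" "j' \<in> tail"
  shows False
  using line_contains_ends_differ[OF assms(1,4,6)]
    line_contains_middle[OF assms(3,2)] line_contains_middle[OF assms(5,2)]
  by simp

lemma no_diag_with_head_row_and_tail_column:
  assumes "line_contains n w (\<lambda>r. G r r)"
    and "line_contains n w (G i)" "line_contains n w (\<lambda>r. G r j)"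
    and "i \<in> head" "j \<in> tail"
  shows False
proof -
  have "G i i \<noteq> G i j" using line_contains_ends_differ[OF assms(2,4,5)] .
  moreover have "G i j \<noteq> G j j" using line_contains_ends_differ[OF assms(3,4,5)] .
  moreover have "G i i \<noteq> G j j" using line_contains_ends_differ[OF assms(1,4,5)] .
  moreover have "G i i = A \<or> G i i = M" "G j j = A \<or> G j j = M"
    using line_contains_letter[OF assms(1)] assms(4,5) two_k_le by auto
  ultimately show False
    using line_contains_letter[OF assms(2), of j] assms(5) by auto
qed

lemma no_diag_with_tail_row_and_head_column:
  assumes "line_contains n w (\<lambda>r. G r r)"
    and "line_contains n w (G i)" "line_contains n w (\<lambda>r. G r j)"
    and "i \<in> tail" "j \<in> head"
  shows False
  using no_diag_with_head_row_and_tail_column[of "\<lambda>r c. G c r" j i] assms by simp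

lemma no_antidiag_with_row_and_column_at_same_end:
  assumes "line_contains n w (\<lambda>r. G r (n - r + 1))"
    and "line_contains n w (G i)" "line_contains n w (\<lambda>r. G r j)"
    and "i \<in> head \<and> j \<in> head \<or> i \<in> tail \<and> j \<in> tail"
  shows False
proof -
  define G' where "G' = (\<lambda>r c. G r (n - c + 1))"
  have "n - (n - j + 1) + 1 = j" using assms(4) two_k_le by auto
  then have "line_contains n w (\<lambda>r. G' r (n - j + 1))"
    using assms(3) by (simp add: G'_def)
  moreover have "line_contains n w (G' i)"
    using line_contains_reverse[OF assms(2)] by (simp add: G'_def)
  moreover have "line_contains n w (\<lambda>r. G' r r)"
    using assms(1) by (simp add: G'_def)
  ultimately show False
    using assms(4) reflect_head_tail no_diag_with_head_row_and_tail_column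
      no_diag_with_tail_row_and_head_column by blast
qed

lemma lines_count_le: "lines_count n w G \<le> max (2 * (n - k) + 1) (4 * k)"
proof -
  let ?row = "\<lambda>i. line_contains n w (G i)"
  let ?col = "\<lambda>j. line_contains n w (\<lambda>r. G r j)"
  define t mr b where t_def: "t = (\<exists>i\<in>head. ?row i)"
    and mr_def: "mr = (\<exists>i\<in>middle. ?row i)"
    and b_def: "b = (\<exists>i\<in>tail. ?row i)"
  define l mc r where l_def: "l = (\<exists>j\<in>head. ?col j)"
    and mc_def: "mc = (\<exists>j\<in>middle. ?col j)"
    and r_def: "r = (\<exists>j\<in>tail. ?col j)"
  define dg ad where dg_def: "dg = line_contains n w (\<lambda>r. G r r)"
    and ad_def: "ad = line_contains n w (\<lambda>r. G r (n - r + 1))"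
  have block_sizes: "card head = k" "card middle = n - 2 * k" "card tail = k"
    using two_k_le by simp_all
  have rows: "card {i \<in> {1..n}. ?row i}
      \<le> (if t then k else 0) + (if mr then n - 2 * k else 0) + (if b then k else 0)"
    using card_filter_Un3_le[of head middle tail ?row]
    unfolding positions_split t_def mr_def b_def block_sizes by simp
  have cols: "card {j \<in> {1..n}. ?col j}
      \<le> (if l then k else 0) + (if mc then n - 2 * k else 0) + (if r then k else 0)"
    using card_filter_Un3_le[of head middle tail ?col]
    unfolding positions_split l_def mc_def r_def block_sizes by simp
  have "mr \<Longrightarrow> \<not> (l \<and> r)"
    unfolding mr_def l_def r_def by (auto intro: no_middle_row_with_head_and_tail_columns)
  moreover have "mc \<Longrightarrow> \<not> (t \<and> b)"
    unfolding mc_def t_def b_def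
    by (auto intro: no_middle_row_with_head_and_tail_columns[of "\<lambda>r c. G c r"])
  moreover have "dg \<Longrightarrow> \<not> (t \<and> r) \<and> \<not> (b \<and> l)"
    unfolding dg_def t_def r_def b_def l_def
    by (auto intro: no_diag_with_head_row_and_tail_column no_diag_with_tail_row_and_head_column)
  moreover have "ad \<Longrightarrow> \<not> (t \<and> l) \<and> \<not> (b \<and> r)"
    unfolding ad_def t_def r_def b_def l_def
    by (auto intro: no_antidiag_with_row_and_column_at_same_end)
  ultimately have "(if t then k else 0) + (if mr then n - 2 * k else 0) + (if b then k else 0)
       + ((if l then k else 0) + (if mc then n - 2 * k else 0) + (if r then k else 0))
       + (if dg then 1 else 0) + (if ad then 1 else 0) \<le> max (2 * (n - 2 * k + k) + 1) (4 * k)"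
    by (rule pattern_count_le[OF k_pos])
  moreover have "lines_count n w G = card {i \<in> {1..n}. ?row i} + card {j \<in> {1..n}. ?col j}
      + (if dg then 1 else 0) + (if ad then 1 else 0)"
    unfolding lines_count_def contains_iff_line_contains dg_def ad_def ..
  moreover have "n - 2 * k + k = n - k"
    using two_k_le by simp
  ultimately show ?thesis
    using rows cols by simp
qed

definition hook_grid :: "nat \<Rightarrow> nat \<Rightarrow> 'a" where
  "hook_grid i j = (if i \<le> k \<or> j \<le> k then A else M)"

definition corners_grid :: "nat \<Rightarrow> nat \<Rightarrow> 'a" where
  "corners_grid i j = (if i \<le> k \<and> j \<le> k \<or> n - k < i \<and> n - k < j then A else M)"

lemma hook_grid_lines_count: "2 * (n - k) + 1 \<le> lines_count n w hook_grid"
proof -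
  have rows: "{k+1..n} \<subseteq> {i \<in> {1..n}. row_contains n w hook_grid i}"
    and cols: "{k+1..n} \<subseteq> {j \<in> {1..n}. col_contains n w hook_grid j}"
    unfolding row_contains_def col_contains_def hook_grid_def by auto
  have "n - k \<le> card {i \<in> {1..n}. row_contains n w hook_grid i}"
    using card_mono[OF _ rows] by simp
  moreover have "n - k \<le> card {j \<in> {1..n}. col_contains n w hook_grid j}"
    using card_mono[OF _ cols] by simp
  moreover have "diag_contains n w hook_grid"
    unfolding diag_contains_def hook_grid_def by auto
  ultimately show ?thesis
    unfolding lines_count_def by simp
qed

lemma corners_grid_lines_count: "4 * k \<le> lines_count n w corners_grid"
proof -
  have "line_contains n w (corners_grid i)" "line_contains n w (\<lambda>r. corners_grid r i)"
    if "i \<in> head \<union> tail" for i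
    using that two_k_le unfolding line_contains_def corners_grid_def by auto
  then have rows: "head \<union> tail \<subseteq> {i \<in> {1..n}. row_contains n w corners_grid i}"
    and cols: "head \<union> tail \<subseteq> {j \<in> {1..n}. col_contains n w corners_grid j}"
    unfolding contains_iff_line_contains using two_k_le by auto
  have "card (head \<union> tail) = 2 * k"
    using two_k_le by (subst card_Un_disjoint) auto
  then have "2 * k \<le> card {i \<in> {1..n}. row_contains n w corners_grid i}"
    and "2 * k \<le> card {j \<in> {1..n}. col_contains n w corners_grid j}"
    using card_mono[OF _ rows] card_mono[OF _ cols] by simp_all
  then show ?thesis
    unfolding lines_count_def by simp
qed

end

lemma Max_range_eqI:
  fixes g :: "'b \<Rightarrow> nat"
  assumes "\<And>x. g x \<le> B" and "B \<le> g x\<^sub>0"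
  shows "Max {g x | x. True} = B"
proof (rule Max_eqI)
  have "{g x | x. True} \<subseteq> {..B}"
    using assms(1) by auto
  then show "finite {g x | x. True}"
    by (rule finite_subset) simp
  show "y \<le> B" if "y \<in> {g x | x. True}" for y
    using that assms(1) by auto
  show "B \<in> {g x | x. True}"
    using assms order_antisym by blast
qed

theorem theorem5:
  fixes n k :: nat and A M :: 'a
  assumes "n \<ge> 2" and "1 \<le> k" and "2 * k \<le> n" and "A \<noteq> M"
  shows "f_max n (\<lambda>i. if i \<le> k then A else M) = max (2 * (n - k) + 1) (4 * k)"
proof -
  interpret AM_word n k A M
    using assms(2-4) by unfold_locales
  obtain G where "max (2 * (n - k) + 1) (4 * k) \<le> lines_count n w G"
    using hook_grid_lines_count corners_grid_lines_count by (metis max_def)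
  then show ?thesis
    unfolding f_max_def by (rule Max_range_eqI[of "lines_count n w", OF lines_count_le])
qed

end
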